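(* Let $\{\omega_n\}_{n\ge0}$ be a sequence in $\mathbb{T}$ with the repetition property. Then for every $\alpha\in\mathbb{T}$, the sequences $\{\omega_n\}_{n\ge0}$ and $\{\alpha n\}_{n\ge0}$ have the joint repetition property. Consequently, for every $\alpha,\beta\in\mathbb{T}$, the sequences $\{\omega_n\}_{n\ge0}$ and $\{\omega_n+\alpha n+\beta\}_{n\ge0}$ have the joint repetition property.
   Context: $\mathbb{T}=\mathbb{R}/\mathbb{Z}$ with metric $\mathrm{dist}(x,y)=\langle x-y\rangle$, where $\langle\tau\rangle=\min\{|\hat\tau-p|:p\in\mathbb{Z}\}$ for any representative $\hat\tau\in\mathbb{R}$ of $\tau$. $\mathbb{Z}_+=\{1,2,\ldots\}$. A sequence $\{\omega_n\}_{n\ge0}$ in a metric space $\Omega$ has the repetition property if for every $\varepsilon>0$ and $r \in \mathbb{Z}_+$ there exists $q \in \mathbb{Z}_+$ such that $\mathrm{dist}(\omega_n,\omega_{n+q}) < \varepsilon$ for $n = 0,1,\ldots, rq$. A family of sequences $\{\omega^{(\gamma)}_n\}_{n\ge0}$ in metric spaces $\Omega^{(\gamma)}$, $\gamma\in\Gamma$, has the joint repetition property if each of them has the repetition property and, for each finite subfamily and each $\varepsilon>0$, $r\in\mathbb{Z}_+$, a single $q\in\mathbb{Z}_+$ can be chosen that works simultaneously for all sequences in the subfamily. *)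

theory Defs
  imports Complex_Main
begin

text \<open>The circle T = R/Z is represented by real representatives; all notions below
  only depend on the classes modulo Z.  The norm is the distance to the nearest integer.\<close>

definition tnorm :: "real \<Rightarrow> real" where
  "tnorm t = Inf {\<bar>t - real_of_int p\<bar> | p. True}"

definition tdist :: "real \<Rightarrow> real \<Rightarrow> real" where
  "tdist x y = tnorm (x - y)"

definition rep_prop :: "('a \<Rightarrow> 'a \<Rightarrow> real) \<Rightarrow> (nat \<Rightarrow> 'a) \<Rightarrow> bool" where
  "rep_prop d w \<longleftrightarrow>
     (\<forall>\<epsilon>>0. \<forall>r::nat. r \<ge> 1 \<longrightarrow>
        (\<exists>q::nat. q \<ge> 1 \<and> (\<forall>n\<le>r*q. d (w n) (w (n+q)) < \<epsilon>)))"

definition joint_rep_prop :: "('a \<Rightarrow> 'a \<Rightarrow> real) \<Rightarrow> (nat \<Rightarrow> 'a) set \<Rightarrow> bool" where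
  "joint_rep_prop d S \<longleftrightarrow>
     (\<forall>w\<in>S. rep_prop d w) \<and>
     (\<forall>F. F \<subseteq> S \<longrightarrow> finite F \<longrightarrow>
        (\<forall>\<epsilon>>0. \<forall>r::nat. r \<ge> 1 \<longrightarrow>
          (\<exists>q::nat. q \<ge> 1 \<and> (\<forall>w\<in>F. \<forall>n\<le>r*q. d (w n) (w (n+q)) < \<epsilon>))))"

end

theory Submission
  imports Defs "HOL-Analysis.Kronecker_Approximation_Theorem"
begin

(* Given \<epsilon> > 0 and r, we need one return time Q that works both for \<omega> and
   for the linear sequence \<alpha> n, i.e. \<omega> returns up to \<epsilon> on [0, rQ] and Q\<alpha> is \<epsilon>-close to
   an integer.  Pick N > 1/\<epsilon> and use the repetition property of \<omega> with the finer
   parameters \<epsilon>/(2N) and (r+1)N to get a return time q; by telescoping, every multiple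
   Kq with 1 \<le> K \<le> N is again a return time for \<omega> with accuracy \<epsilon> on [0, rKq].
   Dirichlet's approximation theorem applied to q\<alpha> yields such a K with Kq\<alpha> within
   1/N < \<epsilon> of an integer, so Q = Kq is a simultaneous return time.  The second family
   follows since the distance between the shifted sequences at n and n + Q is bounded by
   the return error of \<omega> plus the distance of Q\<alpha> to the integers. *)

lemma tnorm_set_bdd_below: "bdd_below {\<bar>t - real_of_int p\<bar> | p. True}"
  by (rule bdd_belowI[of _ 0]) auto

lemma tnorm_le: "tnorm x \<le> \<bar>x - real_of_int p\<bar>"
  unfolding tnorm_def by (rule cInf_lower[OF _ tnorm_set_bdd_below]) auto

lemma tnorm_less_witness:
  assumes "tnorm x < e"
  obtains p where "\<bar>x - real_of_int p\<bar> < e"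
proof -
  have "{\<bar>x - real_of_int p\<bar> | p. True} \<noteq> {}" by auto
  from cInf_lessD[OF this] assms that show thesis unfolding tnorm_def by auto
qed

lemma tnorm_triangle: "tnorm (x + y) \<le> tnorm x + tnorm y"
proof (rule field_le_epsilon)
  fix e :: real assume "0 < e"
  then obtain p q where p: "\<bar>x - real_of_int p\<bar> < tnorm x + e/2"
    and q: "\<bar>y - real_of_int q\<bar> < tnorm y + e/2"
    using tnorm_less_witness[of x "tnorm x + e/2"] tnorm_less_witness[of y "tnorm y + e/2"]
    by (metis add.right_neutral add_strict_left_mono half_gt_zero)
  have "tnorm (x + y) \<le> \<bar>x + y - real_of_int (p + q)\<bar>" by (rule tnorm_le)
  also have "\<dots> \<le> \<bar>x - real_of_int p\<bar> + \<bar>y - real_of_int q\<bar>" by simp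
  finally show "tnorm (x + y) \<le> tnorm x + tnorm y + e" using p q by linarith
qed

lemma tnorm_minus: "tnorm (- x) = tnorm x"
proof -
  have le: "tnorm (- t) \<le> tnorm t" for t
    unfolding tnorm_def[of t]
  proof (rule cInf_greatest)
    show "{\<bar>t - real_of_int p\<bar> | p. True} \<noteq> {}" by auto
  next
    fix d assume "d \<in> {\<bar>t - real_of_int p\<bar> | p. True}"
    then obtain p where "d = \<bar>t - real_of_int p\<bar>" by auto
    then show "tnorm (- t) \<le> d" using tnorm_le[of "- t" "- p"] by simp
  qed
  show ?thesis using le[of x] le[of "- x"] by simp
qed

lemma tdist_telescope:
  fixes w :: "nat \<Rightarrow> real"
  assumes "\<forall>i<j. tdist (w (n + i*q)) (w (n + i*q + q)) < e"
  shows "tdist (w n) (w (n + j*q)) \<le> j * e"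
  using assms
proof (induction j)
  case 0
  then show ?case using tnorm_le[of 0 0] by (simp add: tdist_def)
next
  case (Suc j)
  have "tdist (w n) (w (n + Suc j * q))
      \<le> tdist (w n) (w (n + j*q)) + tdist (w (n + j*q)) (w (n + j*q + q))"
    using tnorm_triangle[of "w n - w (n + j*q)" "w (n + j*q) - w (n + j*q + q)"]
    by (simp add: tdist_def algebra_simps)
  moreover have "tdist (w n) (w (n + j*q)) \<le> j * e" using Suc by auto
  moreover have "tdist (w (n + j*q)) (w (n + j*q + q)) < e" using Suc.prems by auto
  ultimately show ?case by (simp add: algebra_simps)
qed

lemma rep_prop_multiples:
  fixes \<omega> :: "nat \<Rightarrow> real"
  assumes rp: "rep_prop tdist \<omega>" and e: "e > 0" and r: "r \<ge> 1" and N: "N > 0"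
  shows "\<exists>q\<ge>1. \<forall>K\<le>N. \<forall>n\<le>r*(K*q). tdist (\<omega> n) (\<omega> (n + K*q)) < e"
proof -
  define \<delta> where "\<delta> = e / (2 * real N)"
  have "\<delta> > 0" using e N by (simp add: \<delta>_def)
  moreover have "(r+1)*N \<ge> 1" using N by simp
  ultimately obtain q :: nat where q: "q \<ge> 1"
    and step: "\<forall>n\<le>((r+1)*N)*q. tdist (\<omega> n) (\<omega> (n+q)) < \<delta>"
    using rp unfolding rep_prop_def by blast
  have "tdist (\<omega> n) (\<omega> (n + K*q)) < e" if K: "K \<le> N" and n: "n \<le> r*(K*q)" for K n
  proof -
    have "n + i*q \<le> ((r+1)*N)*q" if "i < K" for i
    proof -
      have "i*q \<le> K*q" using \<open>i < K\<close> by simp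
      with n have "n + i*q \<le> r*(K*q) + K*q" by (rule add_mono)
      also have "\<dots> = (r+1)*(K*q)" by simp
      also have "\<dots> = ((r+1)*K)*q" by (simp only: mult.assoc)
      also have "\<dots> \<le> ((r+1)*N)*q" using K by (intro mult_le_mono1 mult_le_mono2)
      finally show ?thesis .
    qed
    then have "tdist (\<omega> n) (\<omega> (n + K*q)) \<le> K * \<delta>"
      using step by (intro tdist_telescope) auto
    also have "\<dots> \<le> N * \<delta>" using K \<open>\<delta> > 0\<close> by (intro mult_right_mono) auto
    also have "\<dots> = e/2" using N by (simp add: \<delta>_def)
    finally show ?thesis using e by linarith
  qed
  then show ?thesis using q by blast
qed

lemma Dirichlet_tnorm:
  assumes "N > 0"
  obtains K :: nat where "1 \<le> K" "K \<le> N" "tnorm (real K * x) < 1 / real N"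
proof -
  obtain h k where k: "0 < k" "k \<le> int N" and hk: "\<bar>of_int k * x - of_int h\<bar> < 1 / real N"
    using Dirichlet_approx[OF assms] by blast
  have "tnorm (real (nat k) * x) \<le> \<bar>of_int k * x - of_int h\<bar>"
    using tnorm_le[of "real (nat k) * x" h] k by simp
  with hk k that[of "nat k"] show thesis by linarith
qed

lemma simultaneous_return:
  fixes \<omega> :: "nat \<Rightarrow> real"
  assumes rp: "rep_prop tdist \<omega>" and e: "e > 0" and r: "r \<ge> 1"
  shows "\<exists>Q\<ge>1. (\<forall>n\<le>r*Q. tdist (\<omega> n) (\<omega> (n+Q)) < e) \<and> tnorm (real Q * \<alpha>) < e"
proof -
  define N :: nat where "N = nat \<lceil>1/e\<rceil> + 1"
  have N: "N > 0" by (simp add: N_def)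
  have "1/e < real N" unfolding N_def by linarith
  then have Ne: "1 / real N < e" using e N by (simp add: field_simps)
  obtain q :: nat where q: "q \<ge> 1"
    and mult: "\<forall>K\<le>N. \<forall>n\<le>r*(K*q). tdist (\<omega> n) (\<omega> (n + K*q)) < e"
    using rep_prop_multiples[OF rp e r N] by blast
  obtain K :: nat where K: "1 \<le> K" "K \<le> N" and approx: "tnorm (real K * (real q * \<alpha>)) < 1 / real N"
    using Dirichlet_tnorm[OF N] by blast
  have "K*q \<ge> 1" using K q by simp
  moreover have "tnorm (real (K*q) * \<alpha>) < e" using approx Ne by (simp add: mult.assoc)
  ultimately show ?thesis using mult K(2) by blast
qed

lemma tdist_add_rotation:
  "tdist (u n + \<alpha> * real n + \<beta>) (u (n+Q) + \<alpha> * real (n+Q) + \<beta>)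
     \<le> tdist (u n) (u (n+Q)) + tnorm (real Q * \<alpha>)"
  using tnorm_triangle[of "u n - u (n+Q)" "- (real Q * \<alpha>)"]
  by (simp add: tdist_def tnorm_minus algebra_simps)

lemma tdist_rotation: "tdist (\<alpha> * real n) (\<alpha> * real (n+Q)) = tnorm (real Q * \<alpha>)"
  using tnorm_minus[of "real Q * \<alpha>"] by (simp add: tdist_def algebra_simps)

text \<open>For a pair of sequences, a common return time for all \<epsilon> and r gives the joint
  repetition property (finite subfamilies of a pair are covered by the pair itself).\<close>
lemma joint_rep_prop_pairI:
  assumes "\<And>e r. e > 0 \<Longrightarrow> r \<ge> 1 \<Longrightarrow>
             \<exists>q\<ge>1. \<forall>n\<le>r*q. d (u n) (u (n+q)) < e \<and> d (v n) (v (n+q)) < e"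
  shows "joint_rep_prop d {u, v}"
  unfolding joint_rep_prop_def rep_prop_def
proof (intro conjI ballI allI impI)
  fix w and e :: real and r :: nat assume "w \<in> {u, v}" "e > 0" "r \<ge> 1"
  then show "\<exists>q\<ge>1. \<forall>n\<le>r * q. d (w n) (w (n + q)) < e" using assms by blast
next
  fix F and e :: real and r :: nat assume "F \<subseteq> {u, v}" "e > 0" "r \<ge> 1"
  then show "\<exists>q\<ge>1. \<forall>w\<in>F. \<forall>n\<le>r * q. d (w n) (w (n + q)) < e" using assms by blast
qed

theorem lemma3p2:
  fixes \<omega> :: "nat \<Rightarrow> real"
  assumes "rep_prop tdist \<omega>"
  shows "(\<forall>\<alpha>::real. joint_rep_prop tdist {\<omega>, (\<lambda>n. \<alpha> * real n)})
       \<and> (\<forall>\<alpha> \<beta> :: real. joint_rep_prop tdist {\<omega>, (\<lambda>n. \<omega> n + \<alpha> * real n + \<beta>)})"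
proof (intro conjI allI joint_rep_prop_pairI)
  fix \<alpha> e :: real and r :: nat assume "e > 0" "r \<ge> 1"
  with simultaneous_return[OF assms] show
    "\<exists>q\<ge>1. \<forall>n\<le>r*q. tdist (\<omega> n) (\<omega> (n+q)) < e \<and> tdist (\<alpha> * real n) (\<alpha> * real (n+q)) < e"
    by (metis tdist_rotation)
next
  fix \<alpha> \<beta> e :: real and r :: nat assume "e > 0" "r \<ge> 1"
  then obtain Q where "Q \<ge> 1" and \<omega>: "\<forall>n\<le>r*Q. tdist (\<omega> n) (\<omega> (n+Q)) < e/2"
    and \<alpha>: "tnorm (real Q * \<alpha>) < e/2"
    using simultaneous_return[OF assms, of "e/2" r \<alpha>] by auto
  have "tdist (\<omega> n + \<alpha> * real n + \<beta>) (\<omega> (n+Q) + \<alpha> * real (n+Q) + \<beta>) < e" if "n \<le> r*Q" for n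
    using tdist_add_rotation[of \<omega> n \<alpha> \<beta> Q] \<omega> \<alpha> that by fastforce
  moreover have "e/2 < e" using \<open>e > 0\<close> by simp
  ultimately show
    "\<exists>q\<ge>1. \<forall>n\<le>r*q. tdist (\<omega> n) (\<omega> (n+q)) < e
       \<and> tdist (\<omega> n + \<alpha> * real n + \<beta>) (\<omega> (n+q) + \<alpha> * real (n+q) + \<beta>) < e"
    using \<omega> \<open>Q \<ge> 1\<close> by (meson less_trans)
qed

end
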